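(* Let $f=f^{(L)}\circ\cdots\circ f^{(1)}$ with $f^{(\ell)}(\mathbf{u})=\sigma(\mathbf{W}^{(\ell)}\mathbf{u}+\mathbf{b}^{(\ell)})$, $\mathbf{W}^{(\ell)}\in\mathbb{R}^{D^{(\ell+1)}\times D^{(\ell)}}$, $\mathbf{b}^{(\ell)}\in\mathbb{R}^{D^{(\ell+1)}}$, where $\sigma$ is continuous, affine on $(-\infty,0]$ and on $[0,\infty)$, applied coordinatewise. Let $\mathbf{V}\in\mathbb{R}^{P\times D^{(1)}}$ have rows $\mathbf{v}_1^T,\dots,\mathbf{v}_P^T$ and let $R$ be their convex hull. Define recursively $\mathbf{V}^{(1)}=\mathbf{V}$ and, for $\ell=1,\dots,L$: $\mathbf{H}^{(\ell)}=\mathbf{V}^{(\ell)}(\mathbf{W}^{(\ell)})^T+\mathbf{1}_P(\mathbf{b}^{(\ell)})^T$; $s^{(\ell)}_k=1$ if $\#\{i:\mathbf{H}^{(\ell)}_{i,k}>0\}\ge P/2$ and $s^{(\ell)}_k=-1$ otherwise; $c^{(\ell)}_k=s^{(\ell)}_k\max_{p}\max(0,-\mathbf{H}^{(\ell)}_{p,k}s^{(\ell)}_k)$; and $\mathbf{V}^{(\ell+1)}=\sigma(\mathbf{V}^{(\ell)}(\mathbf{W}^{(\ell)})^T+\mathbf{1}_P(\mathbf{b}^{(\ell)}+\mathbf{c}^{(\ell)})^T)$. Let $\tilde f=\tilde f^{(L)}\circ\cdots\circ\tilde f^{(1)}$ with $\tilde f^{(\ell)}(\mathbf{u})=\sigma(\mathbf{W}^{(\ell)}\mathbf{u}+\mathbf{b}^{(\ell)}+\mathbf{c}^{(\ell)})$.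 Then, for arbitrary weights $\mathbf{W}^{(\ell)}$ and biases $\mathbf{b}^{(\ell)}$, $\tilde f$ is affine on $R$.
   Context: $\mathbf{1}_P$ is the all-ones vector of length $P$; $\sigma$ applied to a matrix acts entrywise. The network $\tilde f$ is the "POLICEd" network obtained by shifting each layer's bias by $\mathbf{c}^{(\ell)}$, computed from the vertices propagated through the already-shifted previous layers. *)

theory Defs
  imports "HOL-Analysis.Analysis"
begin

text \<open>Layers are indexed 0,...,L-1 (paper: 1,...,L). Layer l maps
  R^(D l) to R^(D (Suc l)). Vectors are functions nat => real, only coordinates
  below the relevant dimension matter.
  W l k j is entry (k,j) of the weight matrix of layer l, b l k the bias.
  The vertex matrix V has rows V p (p < P), each a vector in R^(D 0).\<close>

definition preact :: "(nat \<Rightarrow> nat \<Rightarrow> nat \<Rightarrow> real) \<Rightarrow> (nat \<Rightarrow> nat \<Rightarrow> real) \<Rightarrow> (nat \<Rightarrow> nat)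
    \<Rightarrow> nat \<Rightarrow> (nat \<Rightarrow> nat \<Rightarrow> real) \<Rightarrow> nat \<Rightarrow> nat \<Rightarrow> real" where
  "preact W b D l Vl p k = (\<Sum>j<D l. Vl p j * W l k j) + b l k"

definition sgnvec :: "nat \<Rightarrow> (nat \<Rightarrow> nat \<Rightarrow> real) \<Rightarrow> nat \<Rightarrow> real" where
  "sgnvec P H k = (if real (card {i. i < P \<and> H i k > 0}) \<ge> real P / 2 then 1 else -1)"

definition shiftvec :: "nat \<Rightarrow> (nat \<Rightarrow> nat \<Rightarrow> real) \<Rightarrow> nat \<Rightarrow> real" where
  "shiftvec P H k = sgnvec P H k * Max ((\<lambda>p. max 0 (- H p k * sgnvec P H k)) ` {..<P})"

text \<open>Propagated vertex matrices: policedV ... 0 = V (paper V^(1)),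
  policedV ... (Suc l) = sigma(Vl W^T + 1_P (b + c)^T) (paper V^(l+2)).\<close>
primrec policedV :: "(real \<Rightarrow> real) \<Rightarrow> (nat \<Rightarrow> nat \<Rightarrow> nat \<Rightarrow> real) \<Rightarrow> (nat \<Rightarrow> nat \<Rightarrow> real)
    \<Rightarrow> (nat \<Rightarrow> nat) \<Rightarrow> nat \<Rightarrow> (nat \<Rightarrow> nat \<Rightarrow> real) \<Rightarrow> nat \<Rightarrow> (nat \<Rightarrow> nat \<Rightarrow> real)" where
  "policedV \<sigma> W b D P V 0 = V"
| "policedV \<sigma> W b D P V (Suc l) =
     (\<lambda>p k. \<sigma> (preact W b D l (policedV \<sigma> W b D P V l) p k
               + shiftvec P (preact W b D l (policedV \<sigma> W b D P V l)) k))"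

definition policedc :: "(real \<Rightarrow> real) \<Rightarrow> (nat \<Rightarrow> nat \<Rightarrow> nat \<Rightarrow> real) \<Rightarrow> (nat \<Rightarrow> nat \<Rightarrow> real)
    \<Rightarrow> (nat \<Rightarrow> nat) \<Rightarrow> nat \<Rightarrow> (nat \<Rightarrow> nat \<Rightarrow> real) \<Rightarrow> nat \<Rightarrow> nat \<Rightarrow> real" where
  "policedc \<sigma> W b D P V l = shiftvec P (preact W b D l (policedV \<sigma> W b D P V l))"

primrec policed_net :: "(real \<Rightarrow> real) \<Rightarrow> (nat \<Rightarrow> nat \<Rightarrow> nat \<Rightarrow> real) \<Rightarrow> (nat \<Rightarrow> nat \<Rightarrow> real)
    \<Rightarrow> (nat \<Rightarrow> nat) \<Rightarrow> nat \<Rightarrow> (nat \<Rightarrow> nat \<Rightarrow> real) \<Rightarrow> nat \<Rightarrow> (nat \<Rightarrow> real) \<Rightarrow> (nat \<Rightarrow> real)" where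
  "policed_net \<sigma> W b D P V 0 u = u"
| "policed_net \<sigma> W b D P V (Suc l) u =
     (\<lambda>k. \<sigma> ((\<Sum>j<D l. W l k j * policed_net \<sigma> W b D P V l u j) + b l k
              + policedc \<sigma> W b D P V l k))"

definition rows_hull :: "nat \<Rightarrow> nat \<Rightarrow> (nat \<Rightarrow> nat \<Rightarrow> real) \<Rightarrow> (nat \<Rightarrow> real) set" where
  "rows_hull n P V = {x. (\<forall>j. j \<ge> n \<longrightarrow> x j = 0) \<and>
      (\<exists>\<mu>::nat \<Rightarrow> real. (\<forall>p<P. \<mu> p \<ge> 0) \<and> (\<Sum>p<P. \<mu> p) = 1 \<and>
          (\<forall>j<n. x j = (\<Sum>p<P. \<mu> p * V p j)))}"

definition affine_on :: "nat \<Rightarrow> nat \<Rightarrow> ((nat \<Rightarrow> real) \<Rightarrow> (nat \<Rightarrow> real)) \<Rightarrow> (nat \<Rightarrow> real) set \<Rightarrow> bool" where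
  "affine_on n m F S = (\<exists>(A::nat \<Rightarrow> nat \<Rightarrow> real) (d::nat \<Rightarrow> real).
      \<forall>x\<in>S. \<forall>k<m. F x k = (\<Sum>j<n. A k j * x j) + d k)"

end

theory Submission
  imports Defs
begin

text \<open>Induction over the layers, with the invariant that on the hull R the shifted network
  agrees with one affine map, and that this map sends each vertex v_p to its propagated row
  V^(l)_p. Every point of R is a convex combination of vertices, so each pre-activation of R is
  the same convex combination of the pre-activations of the vertices. The shift c makes every
  column of vertex pre-activations one-signed, so the whole column, and with it the image of R,
  lies on one half-line where \<sigma> is affine; composing affine maps keeps the invariant.\<close>

definition affine_map :: "nat \<Rightarrow> (nat \<Rightarrow> nat \<Rightarrow> real) \<Rightarrow> (nat \<Rightarrow> real) \<Rightarrow> (nat \<Rightarrow> real) \<Rightarrow> nat \<Rightarrow> real"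
  where "affine_map n A d x k = (\<Sum>j<n. A k j * x j) + d k"

lemma affine_map_convex_comb:
  assumes "(\<Sum>p<P. \<mu> p) = 1" and "\<forall>j<n. x j = (\<Sum>p<P. \<mu> p * V p j)"
  shows "affine_map n A d x k = (\<Sum>p<P. \<mu> p * affine_map n A d (V p) k)"
proof -
  have "(\<Sum>j<n. A k j * x j) = (\<Sum>j<n. A k j * (\<Sum>p<P. \<mu> p * V p j))"
    using assms(2) by (intro sum.cong) auto
  also have "\<dots> = (\<Sum>p<P. \<mu> p * (\<Sum>j<n. A k j * V p j))"
    by (simp add: sum_distrib_left sum.swap[of _ "{..<n}"] mult.left_commute)
  finally show ?thesis
    using assms(1) by (simp add: affine_map_def distrib_left sum.distrib sum_distrib_right[symmetric])
qed

lemma sum_mult_affine_map: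
  "(\<Sum>j<m. w j * affine_map n A d y j) = (\<Sum>i<n. (\<Sum>j<m. w j * A j i) * y i) + (\<Sum>j<m. w j * d j)"
  by (simp add: affine_map_def distrib_left sum.distrib sum_distrib_left sum_distrib_right
      sum.swap[of _ "{..<m}"] mult.assoc)

lemma affine_map_scale:
  "a k * affine_map n A d x k + a0 k = affine_map n (\<lambda>k i. a k * A k i) (\<lambda>k. a k * d k + a0 k) x k"
  by (simp add: affine_map_def sum_distrib_left distrib_left mult.assoc)

lemma shifted_column_one_signed:
  "(\<forall>p<P. 0 \<le> H p k + shiftvec P H k) \<or> (\<forall>p<P. H p k + shiftvec P H k \<le> 0)"
proof -
  let ?m = "Max ((\<lambda>p. max 0 (- H p k * sgnvec P H k)) ` {..<P})"
  have ge: "max 0 (- H p k * sgnvec P H k) \<le> ?m" if "p < P" for p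
    using that by (intro Max_ge) auto
  consider "sgnvec P H k = 1" | "sgnvec P H k = -1"
    by (cases "real P / 2 \<le> real (card {i. i < P \<and> H i k > 0})") (simp_all add: sgnvec_def)
  then show ?thesis
  proof cases
    case 1
    then have "\<forall>p<P. 0 \<le> H p k + shiftvec P H k" using ge unfolding shiftvec_def by fastforce
    then show ?thesis ..
  next
    case 2
    then have "\<forall>p<P. H p k + shiftvec P H k \<le> 0" using ge unfolding shiftvec_def by fastforce
    then show ?thesis ..
  qed
qed

lemma affine_on_cones_of_one_signed:
  fixes \<sigma> :: "real \<Rightarrow> real" and h :: "'k \<Rightarrow> nat \<Rightarrow> real"
  assumes neg: "\<exists>a0 a1. \<forall>x\<le>0. \<sigma> x = a1 * x + a0"
    and pos: "\<exists>a0 a1. \<forall>x\<ge>0. \<sigma> x = a1 * x + a0"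
    and one_signed: "\<And>k. (\<forall>p<P. 0 \<le> h k p) \<or> (\<forall>p<P. h k p \<le> 0)"
  obtains a1 a0 where "\<And>k p. p < P \<Longrightarrow> \<sigma> (h k p) = a1 k * h k p + a0 k"
    and "\<And>k (\<mu> :: nat \<Rightarrow> real). \<forall>p<P. 0 \<le> \<mu> p \<Longrightarrow>
           \<sigma> (\<Sum>p<P. \<mu> p * h k p) = a1 k * (\<Sum>p<P. \<mu> p * h k p) + a0 k"
proof -
  obtain n0 n1 where n: "\<forall>x\<le>0. \<sigma> x = n1 * x + n0" using neg by blast
  obtain p0 p1 where p: "\<forall>x\<ge>0. \<sigma> x = p1 * x + p0" using pos by blast
  define nonneg where "nonneg k \<longleftrightarrow> (\<forall>p<P. 0 \<le> h k p)" for k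
  have cone_sign: "if nonneg k then 0 \<le> (\<Sum>p<P. \<mu> p * h k p) else (\<Sum>p<P. \<mu> p * h k p) \<le> 0"
    if "\<forall>p<P. 0 \<le> (\<mu> p :: real)" for k \<mu>
  proof (cases "nonneg k")
    case True
    then show ?thesis using that unfolding nonneg_def by (auto intro!: sum_nonneg)
  next
    case False
    then have "\<forall>p<P. h k p \<le> 0" using one_signed[of k] unfolding nonneg_def by blast
    then show ?thesis using False that by (auto intro!: sum_nonpos mult_nonneg_nonpos)
  qed
  show thesis
  proof (rule that[of "\<lambda>k. if nonneg k then p1 else n1" "\<lambda>k. if nonneg k then p0 else n0"])
    fix k p assume "p < P"
    then show "\<sigma> (h k p) = (if nonneg k then p1 else n1) * h k p + (if nonneg k then p0 else n0)"
      using one_signed[of k] n p unfolding nonneg_def by auto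
  next
    fix k and \<mu> :: "nat \<Rightarrow> real"
    assume \<mu>: "\<forall>p<P. 0 \<le> \<mu> p"
    show "\<sigma> (\<Sum>p<P. \<mu> p * h k p)
        = (if nonneg k then p1 else n1) * (\<Sum>p<P. \<mu> p * h k p) + (if nonneg k then p0 else n0)"
      using cone_sign[OF \<mu>, of k] n p by (cases "nonneg k") simp_all
  qed
qed

definition policed_affine_rep ::
    "(real \<Rightarrow> real) \<Rightarrow> (nat \<Rightarrow> nat \<Rightarrow> nat \<Rightarrow> real) \<Rightarrow> (nat \<Rightarrow> nat \<Rightarrow> real) \<Rightarrow> (nat \<Rightarrow> nat)
      \<Rightarrow> nat \<Rightarrow> (nat \<Rightarrow> nat \<Rightarrow> real) \<Rightarrow> nat \<Rightarrow> (nat \<Rightarrow> nat \<Rightarrow> real) \<Rightarrow> (nat \<Rightarrow> real) \<Rightarrow> bool"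
  where "policed_affine_rep \<sigma> W b D P V l A d \<longleftrightarrow>
    (\<forall>x\<in>rows_hull (D 0) P V. \<forall>k<D l. policed_net \<sigma> W b D P V l x k = affine_map (D 0) A d x k)
    \<and> (\<forall>p<P. \<forall>k<D l. affine_map (D 0) A d (V p) k = policedV \<sigma> W b D P V l p k)"

lemma policed_affine_rep_0:
  "policed_affine_rep \<sigma> W b D P V 0 (\<lambda>k j. if k = j then 1 else 0) (\<lambda>k. 0)"
  by (simp add: policed_affine_rep_def affine_map_def if_distrib[where f="\<lambda>a. a * _"] cong: if_cong)

lemma policed_affine_rep_preact:
  fixes c :: "nat \<Rightarrow> real"
  assumes rep: "policed_affine_rep \<sigma> W b D P V l A d"
  defines "A' \<equiv> \<lambda>k i. \<Sum>j<D l. W l k j * A j i"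
    and "d' \<equiv> \<lambda>k. (\<Sum>j<D l. W l k j * d j) + (b l k + c k)"
  shows policed_affine_rep_preact_hull:
      "x \<in> rows_hull (D 0) P V \<Longrightarrow>
        (\<Sum>j<D l. W l k j * policed_net \<sigma> W b D P V l x j) + (b l k + c k) = affine_map (D 0) A' d' x k"
    and policed_affine_rep_preact_vertex:
      "p < P \<Longrightarrow> preact W b D l (policedV \<sigma> W b D P V l) p k + c k = affine_map (D 0) A' d' (V p) k"
proof -
  assume "x \<in> rows_hull (D 0) P V"
  then have "(\<Sum>j<D l. W l k j * policed_net \<sigma> W b D P V l x j)
      = (\<Sum>j<D l. W l k j * affine_map (D 0) A d x j)"
    using rep unfolding policed_affine_rep_def by (intro sum.cong) auto
  then show "(\<Sum>j<D l. W l k j * policed_net \<sigma> W b D P V l x j) + (b l k + c k)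
      = affine_map (D 0) A' d' x k"
    unfolding sum_mult_affine_map by (simp add: affine_map_def A'_def d'_def add.assoc)
next
  assume "p < P"
  then have "preact W b D l (policedV \<sigma> W b D P V l) p k
      = (\<Sum>j<D l. W l k j * affine_map (D 0) A d (V p) j) + b l k"
    using rep unfolding preact_def policed_affine_rep_def by (auto simp: mult.commute intro!: sum.cong)
  then show "preact W b D l (policedV \<sigma> W b D P V l) p k + c k = affine_map (D 0) A' d' (V p) k"
    unfolding sum_mult_affine_map by (simp add: affine_map_def A'_def d'_def add.assoc)
qed

lemma policed_affine_rep_Suc:
  fixes \<sigma> :: "real \<Rightarrow> real"
  assumes neg: "\<exists>a0 a1. \<forall>x\<le>0. \<sigma> x = a1 * x + a0"
    and pos: "\<exists>a0 a1. \<forall>x\<ge>0. \<sigma> x = a1 * x + a0"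
    and rep: "policed_affine_rep \<sigma> W b D P V l A d"
  shows "\<exists>A' d'. policed_affine_rep \<sigma> W b D P V (Suc l) A' d'"
proof -
  let ?R = "rows_hull (D 0) P V"
  define H where "H = preact W b D l (policedV \<sigma> W b D P V l)"
  define c where "c = shiftvec P H"
  define A' where "A' = (\<lambda>k i. \<Sum>j<D l. W l k j * A j i)"
  define d' where "d' = (\<lambda>k. (\<Sum>j<D l. W l k j * d j) + (b l k + c k))"
  note net_pre = policed_affine_rep_preact_hull[OF rep, where c = c, folded A'_def d'_def]
  note vertex_pre = policed_affine_rep_preact_vertex[OF rep, where c = c, folded H_def A'_def d'_def]
  obtain a1 a0 where
    vertex_act: "\<And>k p. p < P \<Longrightarrow> \<sigma> (H p k + c k) = a1 k * (H p k + c k) + a0 k"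
    and cone_act: "\<And>k \<mu>. \<forall>p<P. 0 \<le> \<mu> p \<Longrightarrow> \<sigma> (\<Sum>p<P. \<mu> p * (H p k + c k))
              = a1 k * (\<Sum>p<P. \<mu> p * (H p k + c k)) + a0 k"
    by (rule affine_on_cones_of_one_signed[OF neg pos,
          where h = "\<lambda>k p. H p k + c k", OF shifted_column_one_signed[of P H, folded c_def]]) (rule that)
  have hull_act: "\<sigma> (affine_map (D 0) A' d' x k) = a1 k * affine_map (D 0) A' d' x k + a0 k"
    if x: "x \<in> ?R" for x k
  proof -
    obtain \<mu> where \<mu>: "\<forall>p<P. 0 \<le> \<mu> p" "(\<Sum>p<P. \<mu> p) = 1" "\<forall>j<D 0. x j = (\<Sum>p<P. \<mu> p * V p j)"
      using x unfolding rows_hull_def by blast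
    have "affine_map (D 0) A' d' x k = (\<Sum>p<P. \<mu> p * affine_map (D 0) A' d' (V p) k)"
      by (rule affine_map_convex_comb[OF \<mu>(2,3)])
    also have "\<dots> = (\<Sum>p<P. \<mu> p * (H p k + c k))"
      using vertex_pre by (intro sum.cong) auto
    finally show ?thesis
      using cone_act[OF \<mu>(1)] by (simp only:)
  qed
  have "policed_affine_rep \<sigma> W b D P V (Suc l) (\<lambda>k i. a1 k * A' k i) (\<lambda>k. a1 k * d' k + a0 k)"
    unfolding policed_affine_rep_def affine_map_scale[symmetric]
  proof (intro conjI ballI allI impI)
    fix x k assume "x \<in> ?R"
    have "policed_net \<sigma> W b D P V (Suc l) x k = \<sigma> (affine_map (D 0) A' d' x k)"
      using net_pre[OF \<open>x \<in> ?R\<close>, of k] by (simp add: policedc_def H_def c_def add.assoc)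
    then show "policed_net \<sigma> W b D P V (Suc l) x k = a1 k * affine_map (D 0) A' d' x k + a0 k"
      using hull_act[OF \<open>x \<in> ?R\<close>] by simp
  next
    fix p k assume "p < P"
    have "policedV \<sigma> W b D P V (Suc l) p k = \<sigma> (H p k + c k)"
      by (simp add: H_def c_def)
    then show "a1 k * affine_map (D 0) A' d' (V p) k + a0 k = policedV \<sigma> W b D P V (Suc l) p k"
      using vertex_act[OF \<open>p < P\<close>] vertex_pre[OF \<open>p < P\<close>] by simp
  qed
  then show ?thesis by blast
qed

theorem mainTheorem3:
  fixes \<sigma> :: "real \<Rightarrow> real"
    and L P :: nat
    and D :: "nat \<Rightarrow> nat"
    and W :: "nat \<Rightarrow> nat \<Rightarrow> nat \<Rightarrow> real"
    and b :: "nat \<Rightarrow> nat \<Rightarrow> real"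
    and V :: "nat \<Rightarrow> nat \<Rightarrow> real"
  assumes cont: "continuous_on UNIV \<sigma>"
    and neg: "\<exists>a0 a1. \<forall>x\<le>0. \<sigma> x = a1 * x + a0"
    and pos: "\<exists>a0 a1. \<forall>x\<ge>0. \<sigma> x = a1 * x + a0"
  shows "affine_on (D 0) (D L) (policed_net \<sigma> W b D P V L) (rows_hull (D 0) P V)"
proof -
  have "\<exists>A d. policed_affine_rep \<sigma> W b D P V l A d" for l
  proof (induction l)
    case 0
    show ?case using policed_affine_rep_0 by blast
  next
    case (Suc l)
    then show ?case using policed_affine_rep_Suc[OF neg pos] by blast
  qed
  then show ?thesis
    unfolding affine_on_def policed_affine_rep_def affine_map_def by blast
qed

end
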